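(* For $n\ge 3$, the family $\mathcal{F}=\{\emptyset\}\cup\{\{i\}:i\in[n]\}\cup\{\{i,j\}: i,j\in[n], i\ne j\}\cup\{\{1,2,\dots,i\}: 3\le i\le n\}$ is induced-$\bowtie$-saturated in $\mathcal{B}_n$; hence $\mathrm{isat}(n,\bowtie)\le\binom{n}{2}+2n-1$.
   Context: $\mathcal{B}_n$ denotes the Boolean lattice $(2^{[n]},\subseteq)$. A family $\mathcal{F}\subseteq 2^{[n]}$ (ordered by inclusion) is induced-$\mathcal{P}$-saturated if it contains no induced copy of $\mathcal{P}$ (an injection $f$ with $u\le v\iff f(u)\subseteq f(v)$) but every family $\mathcal{F}'$ with $\mathcal{F}\subsetneq\mathcal{F}'\subseteq 2^{[n]}$ contains one. $\mathrm{isat}(n,\mathcal{P})$ is the minimum size of such a family. The butterfly $\bowtie$ is the four-element poset on $\{A,B,C,D\}$ whose only strict relations are $A<B$, $A<D$, $C<B$, $C<D$. *)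

theory Defs
  imports Main
begin

definition induced_copy :: "'p set \<Rightarrow> ('p \<Rightarrow> 'p \<Rightarrow> bool) \<Rightarrow> 'a set set \<Rightarrow> bool" where
  "induced_copy P le F \<longleftrightarrow>
     (\<exists>f. inj_on f P \<and> f ` P \<subseteq> F \<and> (\<forall>u\<in>P. \<forall>v\<in>P. le u v \<longleftrightarrow> f u \<subseteq> f v))"

text \<open>The Boolean lattice B_n is the power set of [n] = {1..n}.\<close>

definition induced_saturated ::
    "nat \<Rightarrow> 'p set \<Rightarrow> ('p \<Rightarrow> 'p \<Rightarrow> bool) \<Rightarrow> nat set set \<Rightarrow> bool" where
  "induced_saturated n P le F \<longleftrightarrow>
     F \<subseteq> Pow {1..n} \<and> \<not> induced_copy P le F \<and>
     (\<forall>F'. F \<subset> F' \<and> F' \<subseteq> Pow {1..n} \<longrightarrow> induced_copy P le F')"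

definition isat :: "nat \<Rightarrow> 'p set \<Rightarrow> ('p \<Rightarrow> 'p \<Rightarrow> bool) \<Rightarrow> nat" where
  "isat n P le = Inf {card F | F. induced_saturated n P le F}"

datatype bfly = bA | bB | bC | bD

definition bfly_le :: "bfly \<Rightarrow> bfly \<Rightarrow> bool" where
  "bfly_le u v \<longleftrightarrow> u = v \<or> (u \<in> {bA, bC} \<and> v \<in> {bB, bD})"

end

theory Submission
  imports Defs
begin

text \<open>The top elements B, D of an induced butterfly both contain an element of A - C and
  one of C - A, so if one of them had at most two elements it would be contained in the other.
  Hence in F only the initial segments {1..i} can serve as tops, and these form a chain.
  Conversely, a new set S with at least three elements that is not an initial segment has
  maximum m with some gap j < m; then S and {1..m-1} are incomparable and share two
  elements a, c, so {a}, {c}, S, {1..m-1} form a butterfly.\<close>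

lemma bfly_le_antisym: "bfly_le u v \<Longrightarrow> bfly_le v u \<Longrightarrow> u = v"
  by (cases u; cases v) (auto simp: bfly_le_def)

lemma eq_doubleton_if_card_le_2:
  assumes "finite B" "card B \<le> 2" "x \<in> B" "y \<in> B" "x \<noteq> y"
  shows "B = {x, y}"
  using assms card_seteq[of B "{x, y}"] by auto

lemma finite_card_le_2_cases:
  assumes "finite X" "card X \<le> 2"
  shows "X = {} \<or> (\<exists>i. X = {i}) \<or> (\<exists>i j. i \<noteq> j \<and> X = {i, j})"
proof -
  have "card X = 0 \<or> card X = 1 \<or> card X = 2"
    using assms(2) by linarith
  then show ?thesis
    using assms(1) by (auto simp: card_1_singleton_iff card_2_iff)
qed

lemma common_upper_bound_not_small:
  assumes "A \<subseteq> B" "C \<subseteq> B" "A \<subseteq> D" "C \<subseteq> D"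
    and "\<not> A \<subseteq> C" "\<not> C \<subseteq> A" "\<not> B \<subseteq> D"
  shows "\<not> (finite B \<and> card B \<le> 2)"
proof
  assume small: "finite B \<and> card B \<le> 2"
  obtain x y where "x \<in> A" "x \<notin> C" "y \<in> C" "y \<notin> A"
    using assms(5,6) by blast
  with assms(1,2) small have "B = {x, y}"
    by (intro eq_doubleton_if_card_le_2) auto
  with assms \<open>x \<in> A\<close> \<open>y \<in> C\<close> show False
    by blast
qed

lemma induced_butterfly_tops:
  assumes "induced_copy (UNIV :: bfly set) bfly_le F"
  obtains B D where "B \<in> F" "D \<in> F" "\<not> B \<subseteq> D" "\<not> D \<subseteq> B"
    "\<not> (finite B \<and> card B \<le> 2)" "\<not> (finite D \<and> card D \<le> 2)"
proof -
  obtain f where f_in: "range f \<subseteq> F" and f_iff: "\<forall>u\<in>UNIV. \<forall>v\<in>UNIV. bfly_le u v \<longleftrightarrow> f u \<subseteq> f v"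
    using assms unfolding induced_copy_def by blast
  have rel: "f bA \<subseteq> f bB" "f bA \<subseteq> f bD" "f bC \<subseteq> f bB" "f bC \<subseteq> f bD"
      "\<not> f bA \<subseteq> f bC" "\<not> f bC \<subseteq> f bA" "\<not> f bB \<subseteq> f bD" "\<not> f bD \<subseteq> f bB"
    using f_iff by (auto simp: bfly_le_def)
  show thesis
  proof (rule that)
    show "\<not> (finite (f bB) \<and> card (f bB) \<le> 2)"
      using rel by (intro common_upper_bound_not_small[of "f bA" _ "f bC" "f bD"])
    show "\<not> (finite (f bD) \<and> card (f bD) \<le> 2)"
      using rel by (intro common_upper_bound_not_small[of "f bA" _ "f bC" "f bB"])
  qed (use f_in rel in auto)
qed

lemma no_induced_butterfly_if_large_sets_initial:
  assumes "\<And>X. X \<in> F \<Longrightarrow> (finite X \<and> card X \<le> 2) \<or> (\<exists>i::nat. X = {1..i})"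
  shows "\<not> induced_copy (UNIV :: bfly set) bfly_le F"
proof
  assume "induced_copy (UNIV :: bfly set) bfly_le F"
  then obtain B D where "B \<in> F" "D \<in> F" "\<not> B \<subseteq> D" "\<not> D \<subseteq> B"
      "\<not> (finite B \<and> card B \<le> 2)" "\<not> (finite D \<and> card D \<le> 2)"
    by (rule induced_butterfly_tops)
  moreover obtain i k where "B = {1..i}" "D = {1..k}"
    using assms calculation by blast
  ultimately show False
    by (cases "i \<le> k") auto
qed

lemma induced_butterfly_if_incomparable:
  assumes "{a} \<in> F" "{c} \<in> F" "S \<in> F" "T \<in> F" "a \<noteq> c"
    and "{a, c} \<subseteq> S \<inter> T" "\<not> S \<subseteq> T" "\<not> T \<subseteq> S"
  shows "induced_copy (UNIV :: bfly set) bfly_le F"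
proof -
  define f where "f x = (case x of bA \<Rightarrow> {a} | bB \<Rightarrow> S | bC \<Rightarrow> {c} | bD \<Rightarrow> T)" for x
  have f_iff: "bfly_le u v \<longleftrightarrow> f u \<subseteq> f v" for u v
    by (cases u; cases v) (use assms in \<open>auto simp: bfly_le_def f_def\<close>)
  moreover have "inj f"
    by (rule injI) (metis f_iff bfly_le_antisym order_refl)
  moreover have "range f \<subseteq> F"
    using assms by (auto simp: f_def split: bfly.splits)
  ultimately show ?thesis
    unfolding induced_copy_def by blast
qed

lemma obtain_incomparable_initial_segment:
  fixes S :: "nat set"
  assumes "S \<subseteq> {1..n}" "3 \<le> card S" "\<And>i. S \<noteq> {1..i}"
  obtains a c k where "3 \<le> k" "k \<le> n" "a \<noteq> c" "{a, c} \<subseteq> S \<inter> {1..k}"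
    "\<not> S \<subseteq> {1..k}" "\<not> {1..k} \<subseteq> S"
proof -
  have "finite S" "S \<noteq> {}"
    using assms finite_subset by fastforce+
  define m where "m = Max S"
  have m_in: "m \<in> S" and S_le: "\<And>x. x \<in> S \<Longrightarrow> 1 \<le> x \<and> x \<le> m"
    using \<open>finite S\<close> \<open>S \<noteq> {}\<close> assms(1) by (auto simp: m_def)
  have "\<not> {1..m} \<subseteq> S"
    using assms(3)[of m] S_le by fastforce
  then obtain j where j: "j \<in> {1..m}" "j \<notin> S"
    by blast
  have j_le: "j \<le> m - 1"
    using j m_in by (cases "j = m") auto
  have "card S \<le> card ({1..m} - {j})"
    using S_le j by (intro card_mono) auto
  then have m_ge: "3 \<le> m - 1"
    using assms(2) j by simp
  have "2 \<le> card (S - {m})"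
    using assms(2) m_in \<open>finite S\<close> by simp
  then obtain T where "T \<subseteq> S - {m}" "card T = 2"
    by (meson obtain_subset_with_card_n)
  then obtain a c where ac: "a \<in> S - {m}" "c \<in> S - {m}" "a \<noteq> c"
    by (auto simp: card_2_iff)
  show thesis
  proof (rule that[of "m - 1" a c])
    show "m - 1 \<le> n"
      using m_in assms(1) by fastforce
    show "{a, c} \<subseteq> S \<inter> {1..m - 1}"
      using ac S_le by fastforce
    show "\<not> S \<subseteq> {1..m - 1}"
    proof
      assume "S \<subseteq> {1..m - 1}"
      with m_in have "m \<le> m - 1"
        by auto
      with m_ge show False
        by linarith
    qed
    show "\<not> {1..m - 1} \<subseteq> S"
      using j j_le by auto
  qed (use m_ge ac in auto)
qed

definition small_or_initial :: "nat \<Rightarrow> nat set set" where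
  "small_or_initial n =
     {X. X \<subseteq> {1..n} \<and> card X \<le> 2} \<union> (\<lambda>i. {1..i}) ` {3..n}"

lemma small_or_initial_butterfly_free:
  "\<not> induced_copy (UNIV :: bfly set) bfly_le (small_or_initial n)"
proof (rule no_induced_butterfly_if_large_sets_initial)
  fix X assume "X \<in> small_or_initial n"
  then show "(finite X \<and> card X \<le> 2) \<or> (\<exists>i. X = {1..i})"
    unfolding small_or_initial_def by (auto dest: finite_subset[OF _ finite_atLeastAtMost])
qed

lemma small_or_initial_saturating:
  assumes "small_or_initial n \<subset> F" "F \<subseteq> Pow {1..n}"
  shows "induced_copy (UNIV :: bfly set) bfly_le F"
proof -
  obtain S where S: "S \<in> F" "S \<notin> small_or_initial n" "S \<subseteq> {1..n}"
    using assms by blast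
  then have card_S: "3 \<le> card S"
    by (auto simp: small_or_initial_def)
  have not_initial: "S \<noteq> {1..i}" for i
  proof
    assume "S = {1..i}"
    with card_S S(3) have "i \<in> {3..n}"
      by auto
    with S(2) \<open>S = {1..i}\<close> show False
      by (simp add: small_or_initial_def)
  qed
  obtain a c k where k: "3 \<le> k" "k \<le> n" and ac: "a \<noteq> c" "{a, c} \<subseteq> S \<inter> {1..k}"
    and incomparable: "\<not> S \<subseteq> {1..k}" "\<not> {1..k} \<subseteq> S"
    by (rule obtain_incomparable_initial_segment[OF S(3) card_S not_initial])
  have "{a} \<in> small_or_initial n" "{c} \<in> small_or_initial n" "{1..k} \<in> small_or_initial n"
    using ac k S(3) by (auto simp: small_or_initial_def)
  with assms(1) have "{a} \<in> F" "{c} \<in> F" "{1..k} \<in> F"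
    by auto
  with S(1) ac incomparable show ?thesis
    by (intro induced_butterfly_if_incomparable[of a F c S "{1..k}"]) auto
qed

lemma induced_saturated_small_or_initial:
  "induced_saturated n (UNIV :: bfly set) bfly_le (small_or_initial n)"
  unfolding induced_saturated_def
  using small_or_initial_butterfly_free small_or_initial_saturating
  by (auto simp: small_or_initial_def)

lemma isat_le_card:
  assumes "induced_saturated n P le F"
  shows "isat n P le \<le> card F"
  unfolding isat_def using assms by (intro cInf_lower) auto

lemma card_subsets_card_le:
  assumes "finite A"
  shows "card {B. B \<subseteq> A \<and> card B \<le> k} = (\<Sum>i\<le>k. card A choose i)"
proof -
  have "{B. B \<subseteq> A \<and> card B \<le> k} = (\<Union>i\<le>k. {B. B \<subseteq> A \<and> card B = i})"
    by auto
  also have "card \<dots> = (\<Sum>i\<le>k. card {B. B \<subseteq> A \<and> card B = i})"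
    using assms by (intro card_UN_disjoint) (auto intro: finite_subset[of _ "Pow A"])
  also have "\<dots> = (\<Sum>i\<le>k. card A choose i)"
    using assms by (simp add: n_subsets)
  finally show ?thesis .
qed

lemma card_small_or_initial:
  assumes "3 \<le> n"
  shows "card (small_or_initial n) \<le> (n choose 2) + 2 * n - 1"
proof -
  have "card (small_or_initial n)
          \<le> card {X. X \<subseteq> {1..n} \<and> card X \<le> 2} + card ((\<lambda>i. {1..i}) ` {3..n})"
    unfolding small_or_initial_def by (rule card_Un_le)
  also have "\<dots> \<le> (1 + n + (n choose 2)) + (n - 2)"
    using card_image_le[of "{3..n}" "\<lambda>i. {1..i}"]
    by (simp add: card_subsets_card_le numeral_2_eq_2)
  finally show ?thesis
    using assms by simp
qed

lemma small_or_initial_eq: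
  "{{}} \<union> {{i} | i. i \<in> {1..n}} \<union> {{i, j} | i j. i \<in> {1..n} \<and> j \<in> {1..n} \<and> i \<noteq> j}
     \<union> {{1..i} | i. 3 \<le> i \<and> i \<le> n} = small_or_initial n"
  (is "?F = _")
proof (intro equalityI subsetI)
  fix X assume "X \<in> ?F"
  then consider "X = {}" | i where "i \<in> {1..n}" "X = {i}"
    | i j where "i \<in> {1..n}" "j \<in> {1..n}" "X = {i, j}" | i where "i \<in> {3..n}" "X = {1..i}"
    by auto
  then show "X \<in> small_or_initial n"
    by cases (auto simp: small_or_initial_def card_insert_if)
next
  fix X assume X: "X \<in> small_or_initial n"
  show "X \<in> ?F"
  proof (cases "card X \<le> 2")
    case True
    with X have "X \<subseteq> {1..n}" "finite X"
      by (auto simp: small_or_initial_def dest: finite_subset[OF _ finite_atLeastAtMost])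
    then consider "X = {}" | i where "X = {i}" | i j where "i \<noteq> j" "X = {i, j}"
      using True finite_card_le_2_cases by blast
    then show ?thesis
    proof cases
      case 1
      then show ?thesis by simp
    next
      case (2 i)
      with \<open>X \<subseteq> {1..n}\<close> show ?thesis by simp
    next
      case (3 i j)
      with \<open>X \<subseteq> {1..n}\<close> show ?thesis by blast
    qed
  next
    case False
    with X obtain i where "i \<in> {3..n}" "X = {1..i}"
      by (auto simp: small_or_initial_def)
    then show ?thesis
      by simp
  qed
qed

theorem proposition2p3:
  fixes n :: nat
  assumes "n \<ge> 3"
  defines "F \<equiv> {{}} \<union> {{i} | i. i \<in> {1..n}}
                 \<union> {{i, j} | i j. i \<in> {1..n} \<and> j \<in> {1..n} \<and> i \<noteq> j}
                 \<union> {{1..i} | i. 3 \<le> i \<and> i \<le> n}"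
  shows "induced_saturated n (UNIV :: bfly set) bfly_le F
         \<and> isat n (UNIV :: bfly set) bfly_le \<le> (n choose 2) + 2 * n - 1"
proof -
  have F: "F = small_or_initial n"
    unfolding F_def by (rule small_or_initial_eq)
  have "induced_saturated n (UNIV :: bfly set) bfly_le F"
    unfolding F by (rule induced_saturated_small_or_initial)
  moreover have "isat n (UNIV :: bfly set) bfly_le \<le> card F"
    using calculation by (rule isat_le_card)
  ultimately show ?thesis
    using card_small_or_initial[OF assms(1)] F by simp
qed

end
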